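(* Consider the GSEM described in the context in the "CDC" case: conditional on $\mathbf W=\mathbf w$, $X\sim N(\mu_x,\sigma_x^2)$ with $\mu_x=\mathbf w_1^\top\boldsymbol\beta_x$ and $Y\sim N(\mu_y,\sigma_y^2)$ with $\mu_y=\mathbf w^\top\boldsymbol\beta_y$ ($\sigma_x,\sigma_y>0$), and $M$ is Bernoulli with $P(M=1\mid\mathbf w)=\mathrm{expit}(\mathbf w^\top\boldsymbol\beta_m)$, $\mathrm{expit}(t)=e^t/(1+e^t)$ (so $M=1$ iff $Z_m^*>u_m(\mathbf w)$). Define $u_m(\mathbf w)=\Phi^{-1}(F_m(0\mid\mathbf w))=-\Phi^{-1}(\mathrm{expit}(\mathbf w^\top\boldsymbol\beta_m))$, and for real $z$, $p_z=\Phi(\tau_m u_m(\mathbf w)-\alpha z)$, $d_z=\phi(\tau_m u_m(\mathbf w)-\alpha z)$; let $z_x=(x-\mathbf w_1^\top\boldsymbol\beta_x)/\sigma_x$. Then for any $x_0,x_1$, $$\mathrm{NDE}(x_0,x_1;\mathbf w)=\frac{\sigma_y(\gamma+\alpha\beta)(z_{x_1}-z_{x_0})}{\tau_y}-\frac{\sigma_y\beta}{\tau_y}\left(\frac{p_{z_{x_0}}}{p_{z_{x_1}}}-\frac{1-p_{z_{x_0}}}{1-p_{z_{x_1}}}\right)d_{z_{x_1}},$$ $$\mathrm{NIE}(x_0,x_1;\mathbf w)=\frac{\sigma_y\beta}{\tau_y}\left(\frac{p_{z_{x_0}}}{p_{z_{x_1}}}-\frac{1-p_{z_{x_0}}}{1-p_{z_{x_1}}}\right)d_{z_{x_1}}.$$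 Consequently, $\mathrm{NDE}(x_0,x_1;\mathbf w)=0$ if $\gamma=\beta=0$ or $\gamma=\alpha=0$, and $\mathrm{NIE}(x_0,x_1;\mathbf w)=0$ if $\alpha=0$ or $\beta=0$.
   Context: Generalized structural equation model (GSEM). Let $X$ (exposure), $M$ (mediator), $Y$ (outcome) be scalar random variables and $\mathbf W=(\mathbf W_1^\top,\mathbf W_2^\top)^\top$ a vector of confounders (first entry $1$), with $\mathbf w=(\mathbf w_1^\top,\mathbf w_2^\top)^\top$ a fixed value. Fix real parameters $\alpha,\beta,\gamma$ and let $(Z_x,Z_m,Z_y)$ be latent variables with $Z_x\sim N(0,1)$, $Z_m=\alpha Z_x+\epsilon_m$, $Z_y=\gamma Z_x+\beta Z_m+\epsilon_y$, where $Z_x,\epsilon_m,\epsilon_y$ are independent $N(0,1)$ (independent of $\mathbf W$). Put $\tau_m=\sqrt{\alpha^2+1}$, $\tau_y=\sqrt{(\gamma+\alpha\beta)^2+\beta^2+1}$, $Z_m^*=Z_m/\tau_m$, $Z_y^*=Z_y/\tau_y$ (each standard normal). Conditional on $\mathbf W=\mathbf w$, with marginal CDFs $F_x(\cdot\mid\mathbf w),F_m(\cdot\mid\mathbf w),F_y(\cdot\mid\mathbf w)$ given by generalized linear models, the observed variables are $X=F_x^{-1}(\Phi(Z_x))$, $M=F_m^{-1}(\Phi(Z_m^* ))$, $Y=F_y^{-1}(\Phi(Z_y^* ))$, where $\Phi,\phi$ denote the standard normal CDF and density and $F^{-1}$ is the generalized inverse (quantile function). Counterfactual mean: $\mathrm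 E\{Y(x_a,M(x_b))\mid\mathbf W=\mathbf w\}:=\mathrm E_M\{\mathrm E(Y\mid M,X=x_a,\mathbf W=\mathbf w)\mid X=x_b,\mathbf W=\mathbf w\}$. Conditional natural direct and indirect effects for a change of $X$ from $x_0$ to $x_1$: $\mathrm{NDE}(x_0,x_1;\mathbf w)=\mathrm E\{Y(x_1,M(x_0))\mid\mathbf w\}-\mathrm E\{Y(x_0,M(x_0))\mid\mathbf w\}$ and $\mathrm{NIE}(x_0,x_1;\mathbf w)=\mathrm E\{Y(x_1,M(x_1))\mid\mathbf w\}-\mathrm E\{Y(x_1,M(x_0))\mid\mathbf w\}$. *)

theory Defs
  imports "HOL-Probability.Probability"
begin

abbreviation phi :: "real \<Rightarrow> real" where "phi \<equiv> std_normal_density"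

definition Phi :: "real \<Rightarrow> real" where
  "Phi t = (\<integral>s. indicator {..t} s * std_normal_density s \<partial>lborel)"

definition quantile :: "(real \<Rightarrow> real) \<Rightarrow> real \<Rightarrow> real" where
  "quantile F p = Inf {t. p \<le> F t}"

definition Phi_inv :: "real \<Rightarrow> real" where
  "Phi_inv = quantile Phi"

definition expit :: "real \<Rightarrow> real" where
  "expit t = exp t / (1 + exp t)"

definition normal_cdf :: "real \<Rightarrow> real \<Rightarrow> real \<Rightarrow> real" where
  "normal_cdf \<mu> \<sigma> x = (\<integral>s. indicator {..x} s * normal_density \<mu> \<sigma> s \<partial>lborel)"

definition bern_cdf :: "real \<Rightarrow> real \<Rightarrow> real" where
  "bern_cdf \<pi> t = (if t < 0 then 0 else if t < 1 then 1 - \<pi> else 1)"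

definition lin :: "real list \<Rightarrow> real list \<Rightarrow> real" where
  "lin ws bs = (\<Sum>i<length ws. ws ! i * bs ! i)"

section \<open>The GSEM (conditional on W = w; marginal CDFs Fx Fm Fy already evaluated at w)\<close>

definition tau_m :: "real \<Rightarrow> real" where
  "tau_m \<alpha> = sqrt (\<alpha>\<^sup>2 + 1)"

definition tau_y :: "real \<Rightarrow> real \<Rightarrow> real \<Rightarrow> real" where
  "tau_y \<alpha> \<beta> \<gamma> = sqrt ((\<gamma> + \<alpha> * \<beta>)\<^sup>2 + \<beta>\<^sup>2 + 1)"

text \<open>Observed variables as functions of the latent Z_x = zx and the independent
  standard normal errors em, ey.\<close>
definition obsX :: "(real \<Rightarrow> real) \<Rightarrow> real \<Rightarrow> real" where
  "obsX Fx zx = quantile Fx (Phi zx)"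

definition obsM :: "real \<Rightarrow> (real \<Rightarrow> real) \<Rightarrow> real \<Rightarrow> real \<Rightarrow> real" where
  "obsM \<alpha> Fm zx em = quantile Fm (Phi ((\<alpha> * zx + em) / tau_m \<alpha>))"

definition obsY :: "real \<Rightarrow> real \<Rightarrow> real \<Rightarrow> (real \<Rightarrow> real) \<Rightarrow> real \<Rightarrow> real \<Rightarrow> real \<Rightarrow> real" where
  "obsY \<alpha> \<beta> \<gamma> Fy zx em ey =
     quantile Fy (Phi ((\<gamma> * zx + \<beta> * (\<alpha> * zx + em) + ey) / tau_y \<alpha> \<beta> \<gamma>))"

text \<open>The latent value of Z_x corresponding to the event X = x (X is a strictly
  increasing function of Z_x in the continuous-exposure case).\<close>
definition latX :: "(real \<Rightarrow> real) \<Rightarrow> real \<Rightarrow> real" where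
  "latX Fx x = (THE z. obsX Fx z = x)"

text \<open>P(M = m | X = x, W = w): given X = x, Z_x is fixed and em ~ N(0,1).\<close>
definition cond_PM :: "real \<Rightarrow> (real \<Rightarrow> real) \<Rightarrow> (real \<Rightarrow> real) \<Rightarrow> real \<Rightarrow> real \<Rightarrow> real" where
  "cond_PM \<alpha> Fx Fm m x =
     (\<integral>em. indicator {e. obsM \<alpha> Fm (latX Fx x) e = m} em * phi em \<partial>lborel)"

text \<open>E(Y | M = m, X = x, W = w) for a discrete mediator (the event M = m has
  positive conditional probability): E(Y 1{M=m} | X=x) / P(M=m | X=x).\<close>
definition cond_EY :: "real \<Rightarrow> real \<Rightarrow> real \<Rightarrow> (real \<Rightarrow> real) \<Rightarrow> (real \<Rightarrow> real) \<Rightarrow> (real \<Rightarrow> real)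
                        \<Rightarrow> real \<Rightarrow> real \<Rightarrow> real" where
  "cond_EY \<alpha> \<beta> \<gamma> Fx Fm Fy m x =
     (\<integral>em. (\<integral>ey. indicator {e. obsM \<alpha> Fm (latX Fx x) e = m} em
                    * obsY \<alpha> \<beta> \<gamma> Fy (latX Fx x) em ey * phi em * phi ey \<partial>lborel) \<partial>lborel)
     / cond_PM \<alpha> Fx Fm m x"

text \<open>Counterfactual mean E{Y(x_a, M(x_b)) | w} := E_M{ E(Y | M, X = x_a, w) | X = x_b, w }.\<close>
definition cf_mean :: "real \<Rightarrow> real \<Rightarrow> real \<Rightarrow> (real \<Rightarrow> real) \<Rightarrow> (real \<Rightarrow> real) \<Rightarrow> (real \<Rightarrow> real)
                        \<Rightarrow> real \<Rightarrow> real \<Rightarrow> real" where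
  "cf_mean \<alpha> \<beta> \<gamma> Fx Fm Fy xa xb =
     (\<integral>em. cond_EY \<alpha> \<beta> \<gamma> Fx Fm Fy (obsM \<alpha> Fm (latX Fx xb) em) xa * phi em \<partial>lborel)"

definition NDE :: "real \<Rightarrow> real \<Rightarrow> real \<Rightarrow> (real \<Rightarrow> real) \<Rightarrow> (real \<Rightarrow> real) \<Rightarrow> (real \<Rightarrow> real)
                        \<Rightarrow> real \<Rightarrow> real \<Rightarrow> real" where
  "NDE \<alpha> \<beta> \<gamma> Fx Fm Fy x0 x1 =
     cf_mean \<alpha> \<beta> \<gamma> Fx Fm Fy x1 x0 - cf_mean \<alpha> \<beta> \<gamma> Fx Fm Fy x0 x0"

definition NIE :: "real \<Rightarrow> real \<Rightarrow> real \<Rightarrow> (real \<Rightarrow> real) \<Rightarrow> (real \<Rightarrow> real) \<Rightarrow> (real \<Rightarrow> real)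
                        \<Rightarrow> real \<Rightarrow> real \<Rightarrow> real" where
  "NIE \<alpha> \<beta> \<gamma> Fx Fm Fy x0 x1 =
     cf_mean \<alpha> \<beta> \<gamma> Fx Fm Fy x1 x1 - cf_mean \<alpha> \<beta> \<gamma> Fx Fm Fy x1 x0"

end

theory Submission
  imports Defs "HOL-Real_Asymp.Real_Asymp"
begin

text \<open>Given X = x the latent Z_x is the constant z = (x - mu_x)/sigma_x, and the binary
  mediator is 1 exactly when the error of Z_m exceeds the threshold
  c(z) = tau_m u_m - alpha z.  The outcome is affine in the two errors, so
  E(Y | M, X = x) is governed by a truncated first moment of the standard normal: over
  {e <= c} it equals -phi c, over {e > c} it equals phi c.  Averaging the two conditional
  means with the mediator probabilities p and 1 - p of the other exposure level gives the
  counterfactual means, and NDE and NIE are their differences.\<close>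

section \<open>The standard normal distribution function\<close>

definition std_normal_measure :: "real measure" where
  "std_normal_measure = density lborel phi"

lemma real_distribution_std_normal_measure: "real_distribution std_normal_measure"
  unfolding std_normal_measure_def real_distribution_def real_distribution_axioms_def
  using prob_space_normal_density[where \<mu>=0 and \<sigma>=1] by simp

lemma phi_neq_0: "phi x \<noteq> 0"
  using normal_density_pos[of 1 0 x] by simp

lemma integrable_indicator_phi:
  "A \<in> sets borel \<Longrightarrow> integrable lborel (\<lambda>s. indicator A s * phi s :: real)"
  using integrable_real_mult_indicator[of A lborel phi] by (simp add: mult.commute)

lemma integrable_indicator_x_phi:
  "A \<in> sets borel \<Longrightarrow> integrable lborel (\<lambda>s. indicator A s * (s * phi s) :: real)"
  using integrable_real_mult_indicator[of A lborel "\<lambda>s. phi s * s ^ 1"]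
    integrable_std_normal_moment[of 1]
  by (simp add: mult.commute)

lemma measure_std_normal_measure:
  assumes "A \<in> sets borel"
  shows "measure std_normal_measure A = (\<integral>s. indicator A s * phi s \<partial>lborel)"
proof -
  have "measure std_normal_measure A = integral\<^sup>L std_normal_measure (indicator A)"
    using real_distribution_std_normal_measure assms by (simp add: std_normal_measure_def)
  also have "\<dots> = (\<integral>s. phi s * indicator A s \<partial>lborel)"
    unfolding std_normal_measure_def using assms by (subst integral_density) auto
  finally show ?thesis by (simp add: mult.commute)
qed

lemma Phi_eq_cdf: "Phi = cdf std_normal_measure"
  by (rule ext) (simp add: cdf_def measure_std_normal_measure Phi_def)

lemma measure_std_normal_measure_Ioc_pos:
  assumes "a < b"
  shows "measure std_normal_measure {a<..b} > 0"
proof -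
  let ?I = "\<integral>s. indicator {a<..b} s * phi s \<partial>lborel"
  have "?I \<noteq> 0"
  proof
    assume "?I = 0"
    then have "AE x in lborel. indicator {a<..b} x * phi x = (0::real)"
      by (subst (asm) integral_nonneg_eq_0_iff_AE) (auto intro: integrable_indicator_phi)
    then have "AE x in lborel. x \<notin> {a<..b}"
      by (rule eventually_mono) (auto simp: indicator_def phi_neq_0)
    then have "emeasure lborel {a<..b} = 0"
      using AE_iff_null_sets[of "{a<..b}" lborel] by auto
    with assms show False by simp
  qed
  moreover have "?I \<ge> 0" by (intro integral_nonneg_AE) auto
  ultimately have "?I > 0" by linarith
  then show ?thesis by (simp add: measure_std_normal_measure)
qed

lemma Phi_strict_mono: "a < b \<Longrightarrow> Phi a < Phi b"
proof -
  assume "a < b"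
  interpret real_distribution std_normal_measure
    by (rule real_distribution_std_normal_measure)
  show ?thesis
    using cdf_diff_eq[OF \<open>a < b\<close>] measure_std_normal_measure_Ioc_pos[OF \<open>a < b\<close>]
    by (simp add: Phi_eq_cdf)
qed

lemma Phi_le_iff: "Phi a \<le> Phi b \<longleftrightarrow> a \<le> b"
  by (metis Phi_strict_mono less_le_not_le linorder_not_less order_le_less)

lemma isCont_Phi: "isCont Phi x"
proof -
  interpret real_distribution std_normal_measure
    by (rule real_distribution_std_normal_measure)
  have "(\<integral>s. indicator {x} s * phi s \<partial>lborel) = 0"
    by (rule integral_eq_zero_AE, rule AE_mp[OF AE_lborel_singleton[of x]]) auto
  then show ?thesis
    by (simp add: Phi_eq_cdf isCont_cdf measure_std_normal_measure)
qed

lemma Phi_at_top: "(Phi \<longlongrightarrow> 1) at_top"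
proof -
  interpret real_distribution std_normal_measure
    by (rule real_distribution_std_normal_measure)
  show ?thesis using cdf_lim_at_top_prob by (simp add: Phi_eq_cdf)
qed

lemma Phi_at_bot: "(Phi \<longlongrightarrow> 0) at_bot"
proof -
  interpret real_distribution std_normal_measure
    by (rule real_distribution_std_normal_measure)
  show ?thesis using cdf_lim_at_bot by (simp add: Phi_eq_cdf)
qed

lemma Phi_surj:
  assumes "0 < q" "q < 1"
  obtains t where "Phi t = q"
proof -
  obtain b where b: "Phi b > q"
    using order_tendstoD(1)[OF Phi_at_top assms(2)] by (meson eventually_at_top_linorder order_refl)
  obtain a0 where a0: "\<And>t. t \<le> a0 \<Longrightarrow> Phi t < q"
    using order_tendstoD(2)[OF Phi_at_bot assms(1)] by (auto simp: eventually_at_bot_linorder)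
  have "Phi (min a0 (b - 1)) < q" "min a0 (b - 1) \<le> b"
    using a0 by auto
  then have "\<exists>t\<ge>min a0 (b - 1). t \<le> b \<and> Phi t = q"
    using b isCont_Phi by (intro IVT) auto
  then show ?thesis using that by blast
qed

lemma quantile_Phi: "quantile Phi (Phi t) = t"
proof -
  have "{s. Phi t \<le> Phi s} = {t..}" by (auto simp: Phi_le_iff)
  then show ?thesis by (simp add: quantile_def)
qed

lemma Phi_Phi_inv: "0 < q \<Longrightarrow> q < 1 \<Longrightarrow> Phi (Phi_inv q) = q"
  by (metis Phi_surj quantile_Phi Phi_inv_def)

lemma normal_cdf_eq_Phi:
  assumes "\<sigma> > 0"
  shows "normal_cdf \<mu> \<sigma> x = Phi ((x - \<mu>) / \<sigma>)"
proof -
  have density: "normal_density \<mu> \<sigma> (\<mu> + \<sigma> * u) = phi u / \<sigma>" for u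
  proof -
    have "sqrt (2 * pi * \<sigma>\<^sup>2) = \<sigma> * sqrt (2 * pi)"
      using assms by (simp add: real_sqrt_mult)
    moreover have "(\<mu> + \<sigma> * u - \<mu>)\<^sup>2 / (2 * \<sigma>\<^sup>2) = u\<^sup>2 / 2"
      using assms by (simp add: power_mult_distrib)
    ultimately show ?thesis unfolding normal_density_def std_normal_density_def
      by (simp only:) (simp add: field_simps)
  qed
  have indicator: "indicator {..x} (\<mu> + \<sigma> * u) = (indicator {..(x - \<mu>) / \<sigma>} u :: real)" for u
    using assms by (simp add: indicator_def field_simps)
  have "normal_cdf \<mu> \<sigma> x
      = \<bar>\<sigma>\<bar> *\<^sub>R (\<integral>u. indicator {..x} (\<mu> + \<sigma> * u) * normal_density \<mu> \<sigma> (\<mu> + \<sigma> * u) \<partial>lborel)"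
    unfolding normal_cdf_def using assms
    by (subst lborel_integral_real_affine[where c=\<sigma> and t=\<mu>]) auto
  also have "\<dots> = (\<integral>u. indicator {..(x - \<mu>) / \<sigma>} u * phi u \<partial>lborel)"
    using assms by (simp add: density indicator)
  finally show ?thesis by (simp add: Phi_def)
qed

lemma quantile_normal_cdf_Phi:
  assumes "\<sigma> > 0"
  shows "quantile (normal_cdf \<mu> \<sigma>) (Phi z) = \<mu> + \<sigma> * z"
proof -
  have "{t. Phi z \<le> normal_cdf \<mu> \<sigma> t} = {\<mu> + \<sigma> * z..}"
    using assms by (auto simp: normal_cdf_eq_Phi Phi_le_iff field_simps)
  then show ?thesis by (simp add: quantile_def)
qed

section \<open>Truncated moments of the standard normal density\<close>

lemma phi_has_real_derivative: "(phi has_real_derivative (- x * phi x)) (at x)"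
  unfolding std_normal_density_def
  by (auto intro!: derivative_eq_intros simp: power2_eq_square field_simps)

lemma isCont_phi: "isCont phi x"
  using phi_has_real_derivative DERIV_isCont by blast

lemma integral_Ioi_x_phi: "(\<integral>s. indicator {c<..} s * (s * phi s) \<partial>lborel) = phi c"
proof -
  have "(LBINT x=ereal c..\<infinity>. x * phi x) = 0 - (- phi c)"
  proof (rule interval_integral_FTC_integrable[where F="\<lambda>x. - phi x"])
    show "((\<lambda>x. - phi x) has_vector_derivative x * phi x) (at x)" for x
      using DERIV_minus[OF phi_has_real_derivative[of x]]
      by (simp add: has_real_derivative_iff_has_vector_derivative[symmetric])
    show "isCont (\<lambda>x. x * phi x) x" for x
      using isCont_phi by (intro continuous_intros) auto
    show "set_integrable lborel (einterval (ereal c) \<infinity>) (\<lambda>x. x * phi x)"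
      unfolding set_integrable_def using integrable_indicator_x_phi[of "{c<..}"]
      by (simp add: einterval_def greaterThan_def)
    show "(((\<lambda>x. - phi x) \<circ> real_of_ereal) \<longlongrightarrow> - phi c) (at_right (ereal c))"
      unfolding ereal_tendsto_simps using isCont_phi[of c]
      by (intro tendsto_intros) (simp add: isCont_def filterlim_at_split)
    have "(phi \<longlongrightarrow> 0) at_top"
      unfolding std_normal_density_def by real_asymp
    then show "(((\<lambda>x. - phi x) \<circ> real_of_ereal) \<longlongrightarrow> 0) (at_left \<infinity>)"
      unfolding ereal_tendsto_simps using tendsto_minus by fastforce
  qed simp
  then show ?thesis
    by (simp add: interval_integral_to_infinity_eq set_lebesgue_integral_def)
qed

lemma integral_split_Iic_Ioi:
  fixes f :: "real \<Rightarrow> real"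
  assumes "integrable lborel f"
  shows "(\<integral>s. indicator {..c} s * f s \<partial>lborel) + (\<integral>s. indicator {c<..} s * f s \<partial>lborel)
       = (\<integral>s. f s \<partial>lborel)"
proof -
  have "(\<integral>s. indicator {..c} s * f s \<partial>lborel) + (\<integral>s. indicator {c<..} s * f s \<partial>lborel)
      = (\<integral>s. indicator {..c} s * f s + indicator {c<..} s * f s \<partial>lborel)"
    using assms
    by (intro Bochner_Integration.integral_add[symmetric] integrable_mult_indicator[where 'b=real, simplified])
      auto
  also have "\<dots> = (\<integral>s. f s \<partial>lborel)"
    by (rule Bochner_Integration.integral_cong) (auto simp: indicator_def)
  finally show ?thesis .
qed

lemma integral_Iic_x_phi: "(\<integral>s. indicator {..c} s * (s * phi s) \<partial>lborel) = - phi c"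
  using integral_split_Iic_Ioi[of "\<lambda>s. s * phi s" c] integrable_std_normal_moment[of 1]
    integral_std_normal_moment_odd[of 0] integral_Ioi_x_phi[of c]
  by (simp add: mult.commute)

lemma integral_Ioi_phi: "(\<integral>s. indicator {c<..} s * phi s \<partial>lborel) = 1 - Phi c"
  using integral_split_Iic_Ioi[of phi c] integrable_indicator_phi[of UNIV]
  by (simp add: Phi_def)

lemma Phi_gt_0: "0 < Phi c"
proof -
  have "0 \<le> Phi (c - 1)" unfolding Phi_def by (intro integral_nonneg_AE) auto
  then show ?thesis using Phi_strict_mono[of "c - 1" c] by simp
qed

lemma Phi_less_1: "Phi c < 1"
proof -
  have "(\<integral>s. indicator {c + 1<..} s * phi s \<partial>lborel) \<ge> 0" by (intro integral_nonneg_AE) auto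
  then have "Phi (c + 1) \<le> 1" by (simp add: integral_Ioi_phi)
  then show ?thesis using Phi_strict_mono[of c "c + 1"] by simp
qed

lemma integral_affine_phi: "(\<integral>e. (a + b * e) * phi e \<partial>lborel) = a"
proof -
  have "(\<integral>e. (a + b * e) * phi e \<partial>lborel) = (\<integral>e. a * phi e + b * (e * phi e) \<partial>lborel)"
    by (simp add: algebra_simps)
  also have "\<dots> = a * (\<integral>e. phi e \<partial>lborel) + b * (\<integral>e. e * phi e \<partial>lborel)"
    using integrable_std_normal_moment[of 1] by (simp add: mult.commute)
  finally show ?thesis using integral_std_normal_moment_odd[of 0] by (simp add: mult.commute)
qed

lemma integral_indicator_affine_phi_phi:
  assumes "S \<in> sets borel"
  shows "(\<integral>m. (\<integral>e. indicator S m * (a + b * m + s * e) * phi m * phi e \<partial>lborel) \<partial>lborel)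
       = a * (\<integral>m. indicator S m * phi m \<partial>lborel) + b * (\<integral>m. indicator S m * (m * phi m) \<partial>lborel)"
proof -
  have inner: "(\<integral>e. indicator S m * (a + b * m + s * e) * phi m * phi e \<partial>lborel)
      = indicator S m * (a + b * m) * phi m" for m
    using integral_affine_phi[of "indicator S m * (a + b * m) * phi m" "indicator S m * s * phi m"]
    by (simp add: algebra_simps)
  have "(\<integral>m. indicator S m * (a + b * m) * phi m \<partial>lborel)
      = (\<integral>m. a * (indicator S m * phi m) + b * (indicator S m * (m * phi m)) \<partial>lborel)"
    by (simp add: algebra_simps)
  also have "\<dots> = a * (\<integral>m. indicator S m * phi m \<partial>lborel) + b * (\<integral>m. indicator S m * (m * phi m) \<partial>lborel)"
    using integrable_indicator_phi[OF assms] integrable_indicator_x_phi[OF assms] by simp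
  finally show ?thesis by (simp add: inner)
qed

lemma integral_threshold_phi:
  "(\<integral>m. (if m \<le> c then y0 else y1) * phi m \<partial>lborel) = y0 * Phi c + y1 * (1 - Phi c)"
proof -
  have "(\<integral>m. (if m \<le> c then y0 else y1) * phi m \<partial>lborel)
      = (\<integral>m. y0 * (indicator {..c} m * phi m) + y1 * (indicator {c<..} m * phi m) \<partial>lborel)"
    by (rule Bochner_Integration.integral_cong) (auto simp: indicator_def)
  also have "\<dots> = y0 * Phi c + y1 * (1 - Phi c)"
    using integrable_indicator_phi[of "{..c}"] integrable_indicator_phi[of "{c<..}"]
    by (simp add: Phi_def integral_Ioi_phi)
  finally show ?thesis .
qed

section \<open>Mediation formulas for a threshold mediator and an affine outcome\<close>

lemma cond_PM_threshold:
  assumes "latX Fx x = z" and "\<And>e. obsM \<alpha> Fm z e = (if e \<le> c then 0 else 1)"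
  shows "cond_PM \<alpha> Fx Fm 0 x = Phi c" and "cond_PM \<alpha> Fx Fm 1 x = 1 - Phi c"
proof -
  have "{e. obsM \<alpha> Fm z e = 0} = {..c}" "{e. obsM \<alpha> Fm z e = 1} = {c<..}"
    using assms(2) by auto
  then show "cond_PM \<alpha> Fx Fm 0 x = Phi c" "cond_PM \<alpha> Fx Fm 1 x = 1 - Phi c"
    unfolding cond_PM_def assms(1) by (simp_all add: Phi_def integral_Ioi_phi)
qed

lemma cond_EY_threshold:
  assumes lat: "latX Fx x = z"
    and M: "\<And>e. obsM \<alpha> Fm z e = (if e \<le> c then 0 else 1)"
    and Y: "\<And>em ey. obsY \<alpha> \<beta> \<gamma> Fy z em ey = a + b * em + s * ey"
  shows "cond_EY \<alpha> \<beta> \<gamma> Fx Fm Fy 0 x = a - b * phi c / Phi c"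
    and "cond_EY \<alpha> \<beta> \<gamma> Fx Fm Fy 1 x = a + b * phi c / (1 - Phi c)"
proof -
  have sets: "{e. obsM \<alpha> Fm z e = 0} = {..c}" "{e. obsM \<alpha> Fm z e = 1} = {c<..}"
    using M by auto
  note PM = cond_PM_threshold[OF lat M]
  have "cond_EY \<alpha> \<beta> \<gamma> Fx Fm Fy 0 x = (a * Phi c - b * phi c) / Phi c"
    unfolding cond_EY_def lat sets Y PM integral_indicator_affine_phi_phi[OF atMost_borel]
    by (simp add: integral_Iic_x_phi Phi_def)
  also have "\<dots> = a - b * phi c / Phi c"
    using Phi_gt_0[of c] by (simp add: diff_divide_distrib)
  finally show "cond_EY \<alpha> \<beta> \<gamma> Fx Fm Fy 0 x = a - b * phi c / Phi c" .
  have "cond_EY \<alpha> \<beta> \<gamma> Fx Fm Fy 1 x = (a * (1 - Phi c) + b * phi c) / (1 - Phi c)"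
    unfolding cond_EY_def lat sets Y PM integral_indicator_affine_phi_phi[OF greaterThan_borel]
    by (simp add: integral_Ioi_x_phi integral_Ioi_phi)
  also have "\<dots> = a + b * phi c / (1 - Phi c)"
    using Phi_less_1[of c] by (simp add: add_divide_distrib)
  finally show "cond_EY \<alpha> \<beta> \<gamma> Fx Fm Fy 1 x = a + b * phi c / (1 - Phi c)" .
qed

lemma cf_mean_threshold:
  assumes "latX Fx xa = za" and "latX Fx xb = zb"
    and M: "\<And>z e. obsM \<alpha> Fm z e = (if e \<le> c z then 0 else 1)"
    and "\<And>em ey. obsY \<alpha> \<beta> \<gamma> Fy za em ey = a + b * em + s * ey"
  shows "cf_mean \<alpha> \<beta> \<gamma> Fx Fm Fy xa xb
       = a - b * (Phi (c zb) / Phi (c za) - (1 - Phi (c zb)) / (1 - Phi (c za))) * phi (c za)"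
proof -
  note EY = cond_EY_threshold[OF assms(1) M assms(4)]
  have "cf_mean \<alpha> \<beta> \<gamma> Fx Fm Fy xa xb
      = (\<integral>m. (if m \<le> c zb then cond_EY \<alpha> \<beta> \<gamma> Fx Fm Fy 0 xa else cond_EY \<alpha> \<beta> \<gamma> Fx Fm Fy 1 xa)
            * phi m \<partial>lborel)"
    unfolding cf_mean_def assms(2) M by (rule Bochner_Integration.integral_cong) auto
  also have "\<dots> = (a - b * phi (c za) / Phi (c za)) * Phi (c zb)
                + (a + b * phi (c za) / (1 - Phi (c za))) * (1 - Phi (c zb))"
    unfolding integral_threshold_phi EY ..
  finally show ?thesis by (simp add: algebra_simps)
qed

lemma latX_normal_cdf:
  assumes "\<sigma> > 0"
  shows "latX (normal_cdf \<mu> \<sigma>) x = (x - \<mu>) / \<sigma>"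
  unfolding latX_def obsX_def using assms
  by (intro the_equality) (auto simp: quantile_normal_cdf_Phi field_simps)

lemma quantile_bern_cdf:
  assumes "0 < \<pi>" "\<pi> < 1" "0 < q" "q < 1"
  shows "quantile (bern_cdf \<pi>) q = (if q \<le> 1 - \<pi> then 0 else 1)"
proof -
  have "{t. q \<le> bern_cdf \<pi> t} = (if q \<le> 1 - \<pi> then {0..} else {1..})"
    using assms by (auto simp: bern_cdf_def)
  then show ?thesis by (simp add: quantile_def)
qed

lemma obsM_bern_cdf:
  assumes "0 < \<pi>" "\<pi> < 1"
  shows "obsM \<alpha> (bern_cdf \<pi>) z e = (if e \<le> tau_m \<alpha> * Phi_inv (1 - \<pi>) - \<alpha> * z then 0 else 1)"
proof -
  have "tau_m \<alpha> > 0" unfolding tau_m_def by (simp add: add_nonneg_pos)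
  have "Phi (Phi_inv (1 - \<pi>)) = 1 - \<pi>"
    using assms by (intro Phi_Phi_inv) auto
  then have "Phi ((\<alpha> * z + e) / tau_m \<alpha>) \<le> 1 - \<pi> \<longleftrightarrow> (\<alpha> * z + e) / tau_m \<alpha> \<le> Phi_inv (1 - \<pi>)"
    by (metis Phi_le_iff)
  also have "\<dots> \<longleftrightarrow> e \<le> tau_m \<alpha> * Phi_inv (1 - \<pi>) - \<alpha> * z"
    using \<open>tau_m \<alpha> > 0\<close> by (simp add: pos_divide_le_eq algebra_simps)
  finally show ?thesis
    unfolding obsM_def using assms by (simp add: quantile_bern_cdf Phi_gt_0 Phi_less_1)
qed

lemma obsY_normal_cdf:
  assumes "\<sigma> > 0"
  shows "obsY \<alpha> \<beta> \<gamma> (normal_cdf \<mu> \<sigma>) z em ey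
       = (\<mu> + \<sigma> * (\<gamma> + \<alpha> * \<beta>) * z / tau_y \<alpha> \<beta> \<gamma>)
         + \<sigma> * \<beta> / tau_y \<alpha> \<beta> \<gamma> * em + \<sigma> / tau_y \<alpha> \<beta> \<gamma> * ey"
proof -
  have "tau_y \<alpha> \<beta> \<gamma> > 0" unfolding tau_y_def by (simp add: add_nonneg_pos)
  then show ?thesis
    unfolding obsY_def using assms by (simp add: quantile_normal_cdf_Phi field_simps)
qed

lemma expit_gt_0: "0 < expit t" and expit_less_1: "expit t < 1"
  unfolding expit_def by (auto simp: add_pos_pos)

theorem proposition2:
  fixes \<alpha> \<beta> \<gamma> \<sigma>x \<sigma>y x0 x1 :: real
    and w1 w2 \<beta>x \<beta>m1 \<beta>m2 \<beta>y1 \<beta>y2 :: "real list"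
    and Fx Fm Fy :: "real \<Rightarrow> real" and um :: real and p d zx :: "real \<Rightarrow> real"
  assumes "\<sigma>x > 0" and "\<sigma>y > 0"
    and "w1 \<noteq> []" and "hd w1 = 1"
    and "length \<beta>x = length w1"
    and "length \<beta>m1 = length w1" and "length \<beta>m2 = length w2"
    and "length \<beta>y1 = length w1" and "length \<beta>y2 = length w2"
  defines "Fx \<equiv> normal_cdf (lin w1 \<beta>x) \<sigma>x"
    and "Fm \<equiv> bern_cdf (expit (lin w1 \<beta>m1 + lin w2 \<beta>m2))"
    and "Fy \<equiv> normal_cdf (lin w1 \<beta>y1 + lin w2 \<beta>y2) \<sigma>y"
    and "um \<equiv> Phi_inv (Fm 0)"
    and "p \<equiv> (\<lambda>z. Phi (tau_m \<alpha> * um - \<alpha> * z))"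
    and "d \<equiv> (\<lambda>z. phi (tau_m \<alpha> * um - \<alpha> * z))"
    and "zx \<equiv> (\<lambda>x. (x - lin w1 \<beta>x) / \<sigma>x)"
  shows "NDE \<alpha> \<beta> \<gamma> Fx Fm Fy x0 x1 =
           \<sigma>y * (\<gamma> + \<alpha> * \<beta>) * (zx x1 - zx x0) / tau_y \<alpha> \<beta> \<gamma>
           - \<sigma>y * \<beta> / tau_y \<alpha> \<beta> \<gamma>
             * (p (zx x0) / p (zx x1) - (1 - p (zx x0)) / (1 - p (zx x1))) * d (zx x1)
       \<and> NIE \<alpha> \<beta> \<gamma> Fx Fm Fy x0 x1 =
           \<sigma>y * \<beta> / tau_y \<alpha> \<beta> \<gamma>
             * (p (zx x0) / p (zx x1) - (1 - p (zx x0)) / (1 - p (zx x1))) * d (zx x1)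
       \<and> ((\<gamma> = 0 \<and> \<beta> = 0) \<or> (\<gamma> = 0 \<and> \<alpha> = 0) \<longrightarrow> NDE \<alpha> \<beta> \<gamma> Fx Fm Fy x0 x1 = 0)
       \<and> (\<alpha> = 0 \<or> \<beta> = 0 \<longrightarrow> NIE \<alpha> \<beta> \<gamma> Fx Fm Fy x0 x1 = 0)"
proof -
  define \<pi> where "\<pi> = expit (lin w1 \<beta>m1 + lin w2 \<beta>m2)"
  have \<pi>: "0 < \<pi>" "\<pi> < 1" unfolding \<pi>_def by (rule expit_gt_0 expit_less_1)+
  have "um = Phi_inv (1 - \<pi>)" unfolding um_def Fm_def \<pi>_def bern_cdf_def by simp
  then have M: "obsM \<alpha> Fm z e = (if e \<le> tau_m \<alpha> * um - \<alpha> * z then 0 else 1)" for z e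
    unfolding Fm_def \<pi>_def[symmetric] using \<pi> by (simp add: obsM_bern_cdf)
  have lat: "latX Fx x = zx x" for x
    unfolding Fx_def zx_def using assms(1) by (rule latX_normal_cdf)
  have Y: "obsY \<alpha> \<beta> \<gamma> Fy z em ey
      = (lin w1 \<beta>y1 + lin w2 \<beta>y2 + \<sigma>y * (\<gamma> + \<alpha> * \<beta>) * z / tau_y \<alpha> \<beta> \<gamma>)
        + \<sigma>y * \<beta> / tau_y \<alpha> \<beta> \<gamma> * em + \<sigma>y / tau_y \<alpha> \<beta> \<gamma> * ey" for z em ey
    unfolding Fy_def using assms(2) by (rule obsY_normal_cdf)
  define D where "D xa xb = p (zx xb) / p (zx xa) - (1 - p (zx xb)) / (1 - p (zx xa))" for xa xb
  have cf: "cf_mean \<alpha> \<beta> \<gamma> Fx Fm Fy xa xb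
      = (lin w1 \<beta>y1 + lin w2 \<beta>y2 + \<sigma>y * (\<gamma> + \<alpha> * \<beta>) * zx xa / tau_y \<alpha> \<beta> \<gamma>)
        - \<sigma>y * \<beta> / tau_y \<alpha> \<beta> \<gamma> * D xa xb * d (zx xa)" for xa xb
    using cf_mean_threshold[OF lat lat M Y] unfolding p_def d_def D_def .
  have "D x x = 0" for x
    unfolding D_def p_def using Phi_gt_0 Phi_less_1 by (simp add: less_le)
  moreover have "\<alpha> = 0 \<Longrightarrow> D x1 x0 = D x1 x1"
    unfolding D_def p_def by simp
  ultimately show ?thesis
    unfolding NDE_def NIE_def cf D_def[symmetric] by (auto simp: algebra_simps diff_divide_distrib)
qed

end
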